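(* Let $n \ge 2$ and let $\vdash$ be derivability in any proof system $\mathcal{S}$ over located sequents (for truth-values $v_1,\dots,v_n$) whose object language contains the unary operators $N_1,\dots,N_n$ and which contains the structural rules listed in the context (initial sequents, shifting, coordination, weakening, cut), possibly together with further rules. Suppose the empty located sequent ${} : {}$ (both sides empty) is not derivable in $\mathcal{S}$. If $v_j$ and $v_k$ ($1 \le j,k \le n$) are both truths (in the sense defined in the context), then $j = k$. Equivalently: if there are two truths $v_j, v_k$ with $j \neq k$, then the empty sequent ${}:{}$ is derivable in $\mathcal{S}$.
   Context: Fix $n \ge 2$ and truth-values $\mathcal{V}=\{v_1,\dots,v_n\}$. A located formula is a pair $(\varphi,k)$ with $\varphi$ an object-language formula and $k\in\{1,\dots,n\}$ (intended meaning: $\varphi$ has value $v_k$). A located sequent is $\Gamma : \Delta$ with $\Gamma,\Delta$ finite (possibly empty) sets of located formulas; "$\Gamma:\Delta,(\varphi,i)$" denotes $\Gamma : \Delta\cup\{(\varphi,i)\}$, and "$\Gamma:\Delta,\{(\varphi,m)\mid m\neq i\}$" denotes $\Gamma:\Delta\cup\{(\varphi,m)\mid 1\le m\le n,\ m\ne i\}$. The proof system contains at least the following rules, for all finite $\Gamma,\Delta,\Gamma',\Delta'$, formulas $\varphi$ and indices: (initial) $\Gamma,(\varphi,i) : \Delta,(\varphi,i)$ is derivable for every $1\le i\le n$; (shift right $\overrightarrow{s}_i$) from $\Gamma,(\varphi,i):\Delta$ infer $\Gamma:\Delta,\{(\varphi,m)\mid m\ne i\}$; (shift left $\overleftarrow{s}_{i,j}$,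 $j\ne i$) from $\Gamma:\Delta,(\varphi,i)$ infer $\Gamma,(\varphi,j):\Delta$; (coordination $c_{i,j}$, $i\ne j$) from $\Gamma:\Delta,(\varphi,i)$ and $\Gamma:\Delta,(\varphi,j)$ infer $\Gamma:\Delta$; (weakening) from $\Gamma:\Delta$ infer $\Gamma\cup\Gamma':\Delta\cup\Delta'$; (cut) from $\Gamma:\Delta,(\varphi,i)$ and $\Gamma,(\varphi,i):\Delta$ infer $\Gamma:\Delta$. Definition (truth): $v_j$ is a truth iff for every $1\le i\le n$, every formula $\varphi$ and all finite $\Gamma,\Delta$: the sequent $\Gamma:\Delta,(N_i\varphi,j)$ is derivable iff the sequent $\Gamma:\Delta,\{(\varphi,m)\mid m\ne i\}$ is derivable. *)

theory Defs
  imports Main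
begin

text \<open>Located formulas are pairs (phi, k) with phi :: 'f an object-language formula
and k a truth-value index in {1..n}.  A located sequent Gamma : Delta is a pair of
finite sets of located formulas.  A proof system is represented by its derivability
predicate D :: located set \<Rightarrow> located set \<Rightarrow> bool.\<close>

type_synonym 'f located = "'f \<times> nat"

definition located_set :: "nat \<Rightarrow> 'f located set \<Rightarrow> bool" where
  "located_set n G \<longleftrightarrow> finite G \<and> (\<forall>x\<in>G. snd x \<in> {1..n})"

definition structural_system ::
  "nat \<Rightarrow> ('f located set \<Rightarrow> 'f located set \<Rightarrow> bool) \<Rightarrow> bool" where
  "structural_system n D \<longleftrightarrow>
     (\<forall>G Dl phi i. located_set n G \<longrightarrow> located_set n Dl \<longrightarrow> i \<in> {1..n} \<longrightarrow>
        D (insert (phi, i) G) (insert (phi, i) Dl))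
   \<and> (\<forall>G Dl phi i. located_set n G \<longrightarrow> located_set n Dl \<longrightarrow> i \<in> {1..n} \<longrightarrow>
        D (insert (phi, i) G) Dl \<longrightarrow> D G (Dl \<union> {(phi, m) | m. m \<in> {1..n} \<and> m \<noteq> i}))
   \<and> (\<forall>G Dl phi i j. located_set n G \<longrightarrow> located_set n Dl \<longrightarrow> i \<in> {1..n} \<longrightarrow>
        j \<in> {1..n} \<longrightarrow> j \<noteq> i \<longrightarrow>
        D G (insert (phi, i) Dl) \<longrightarrow> D (insert (phi, j) G) Dl)
   \<and> (\<forall>G Dl phi i j. located_set n G \<longrightarrow> located_set n Dl \<longrightarrow> i \<in> {1..n} \<longrightarrow>
        j \<in> {1..n} \<longrightarrow> i \<noteq> j \<longrightarrow>
        D G (insert (phi, i) Dl) \<longrightarrow> D G (insert (phi, j) Dl) \<longrightarrow> D G Dl)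
   \<and> (\<forall>G Dl G' Dl'. located_set n G \<longrightarrow> located_set n Dl \<longrightarrow>
        located_set n G' \<longrightarrow> located_set n Dl' \<longrightarrow>
        D G Dl \<longrightarrow> D (G \<union> G') (Dl \<union> Dl'))
   \<and> (\<forall>G Dl phi i. located_set n G \<longrightarrow> located_set n Dl \<longrightarrow> i \<in> {1..n} \<longrightarrow>
        D G (insert (phi, i) Dl) \<longrightarrow> D (insert (phi, i) G) Dl \<longrightarrow> D G Dl)"

definition is_truth ::
  "nat \<Rightarrow> ('f located set \<Rightarrow> 'f located set \<Rightarrow> bool) \<Rightarrow> (nat \<Rightarrow> 'f \<Rightarrow> 'f) \<Rightarrow> nat \<Rightarrow> bool" where
  "is_truth n D N j \<longleftrightarrow>
     (\<forall>i phi G Dl. i \<in> {1..n} \<longrightarrow> located_set n G \<longrightarrow> located_set n Dl \<longrightarrow>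
        (D G (insert (N i phi, j) Dl) \<longleftrightarrow>
         D G (Dl \<union> {(phi, m) | m. m \<in> {1..n} \<and> m \<noteq> i})))"

end

theory Submission
  imports Defs
begin

text \<open>If \<open>v\<^sub>j\<close> and \<open>v\<^sub>k\<close> are both truths, then \<open>N\<^sub>i \<phi>\<close> located at \<open>j\<close> and at \<open>k\<close>
are interderivable on the right, both being equivalent to \<open>\<phi>\<close> located at all values
other than \<open>i\<close>. For \<open>j \<noteq> k\<close> coordination then erases any right-hand \<open>(N\<^sub>i \<phi>, j)\<close>.
Starting from the initial sequent \<open>(\<psi>, j) : (\<psi>, j)\<close> with \<open>\<psi> = N\<^sub>1 \<chi>\<close>, this gives
\<open>(\<psi>, j) : \<close>; shifting right and using that \<open>v\<^sub>j\<close> is a truth yields \<open> : (N\<^sub>j \<psi>, j)\<close>,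
and erasing once more gives the empty sequent.\<close>

lemma structural_system_initial:
  assumes "structural_system n D" "located_set n G" "located_set n Dl" "i \<in> {1..n}"
  shows "D (insert (phi, i) G) (insert (phi, i) Dl)"
  using assms(1)[unfolded structural_system_def, THEN conjunct1] assms(2-4) by blast

lemma structural_system_shift_right:
  assumes "structural_system n D" "located_set n G" "located_set n Dl" "i \<in> {1..n}"
    and "D (insert (phi, i) G) Dl"
  shows "D G (Dl \<union> {(phi, m) | m. m \<in> {1..n} \<and> m \<noteq> i})"
  using assms(1)[unfolded structural_system_def, THEN conjunct2, THEN conjunct1] assms(2-5)
  by blast

lemma structural_system_coordination:
  assumes "structural_system n D" "located_set n G" "located_set n Dl"
    and "i \<in> {1..n}" "j \<in> {1..n}" "i \<noteq> j"
    and "D G (insert (phi, i) Dl)" "D G (insert (phi, j) Dl)"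
  shows "D G Dl"
  using assms(1)[unfolded structural_system_def, THEN conjunct2, THEN conjunct2,
      THEN conjunct2, THEN conjunct1] assms(2-8)
  by blast

lemma located_set_empty: "located_set n {}"
  by (simp add: located_set_def)

lemma located_set_singleton: "i \<in> {1..n} \<Longrightarrow> located_set n {(phi, i)}"
  by (simp add: located_set_def)

lemma is_truth_right_iff:
  assumes "is_truth n D N j" "i \<in> {1..n}" "located_set n G" "located_set n Dl"
  shows "D G (insert (N i phi, j) Dl) \<longleftrightarrow>
         D G (Dl \<union> {(phi, m) | m. m \<in> {1..n} \<and> m \<noteq> i})"
  using assms unfolding is_truth_def by blast

lemma two_truths_right_iff:
  assumes "is_truth n D N j" "is_truth n D N k"
    and "i \<in> {1..n}" "located_set n G" "located_set n Dl"
  shows "D G (insert (N i phi, j) Dl) \<longleftrightarrow> D G (insert (N i phi, k) Dl)"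
  using is_truth_right_iff[OF assms(1) assms(3-5)] is_truth_right_iff[OF assms(2) assms(3-5)]
  by simp

lemma two_truths_erase_right:
  assumes "structural_system n D" "is_truth n D N j" "is_truth n D N k"
    and "j \<in> {1..n}" "k \<in> {1..n}" "j \<noteq> k"
    and "i \<in> {1..n}" "located_set n G" "located_set n Dl"
    and "D G (insert (N i phi, j) Dl)"
  shows "D G Dl"
proof -
  have "D G (insert (N i phi, k) Dl)"
    using two_truths_right_iff[OF assms(2,3,7-9)] assms(10) by simp
  then show ?thesis
    using structural_system_coordination[OF assms(1,8,9,4-6)] assms(10) by blast
qed

theorem mainTheorem1:
  fixes n :: nat
    and D :: "'f located set \<Rightarrow> 'f located set \<Rightarrow> bool"
    and N :: "nat \<Rightarrow> 'f \<Rightarrow> 'f"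
    and j k :: nat
  assumes "n \<ge> 2"
    and "structural_system n D"
    and "\<not> D {} {}"
    and "j \<in> {1..n}" and "k \<in> {1..n}"
    and "is_truth n D N j" and "is_truth n D N k"
  shows "j = k"
proof (rule ccontr)
  assume "j \<noteq> k"
  note erase = two_truths_erase_right[OF assms(2,6,7,4,5) \<open>j \<noteq> k\<close>]
  fix chi :: 'f
  define psi where "psi = N 1 chi"
  have one: "1 \<in> {1..n}" using assms(1) by simp
  have "D {(psi, j)} {(psi, j)}"
    using structural_system_initial[OF assms(2) located_set_empty located_set_empty assms(4)]
    by simp
  then have "D {(psi, j)} {}"
    using erase[OF one located_set_singleton[OF assms(4)] located_set_empty]
    unfolding psi_def by simp
  then have "D {} ({} \<union> {(psi, m) | m. m \<in> {1..n} \<and> m \<noteq> j})"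
    using structural_system_shift_right[OF assms(2) located_set_empty located_set_empty assms(4)]
    by simp
  then have "D {} {(N j psi, j)}"
    using is_truth_right_iff[OF assms(6,4) located_set_empty located_set_empty] by simp
  then have "D {} {}"
    using erase[OF assms(4) located_set_empty located_set_empty] by simp
  with assms(3) show False ..
qed

end
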